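(* Let $\varphi:MU^*\otimes_{\mathbb{Z}}\mathbb{Q}\to\mathbb{C}$ be any complex-valued genus, with logarithm $\log_\varphi$ and characteristic power series $Q_\varphi(z)=z/\log_\varphi^{-1}(z)$. Then $\varphi$ has a unique representation as an element of the non-commutative probability space $(\tilde{\mathcal E}_1,\tilde\tau_1)$, given by the canonical operator $$A_\varphi=(1+l)\,\frac{1}{Q_\varphi}(l^* )=(1+l)\Big(\frac{\log_\varphi^{-1}(z)}{z}\Big)(l^* );$$ that is, $A_\varphi\in\tilde{\mathcal E}_1$, $\tilde\tau_1(A_\varphi)\neq0$, the $S$-transform of the $\tilde\tau_1$-distribution of $A_\varphi$ equals $Q_\varphi$, and distinct genera give distinct operators $A_\varphi$ (and distinct distributions).
   Context: $MU^*$ is the complex cobordism ring. A complex-valued genus is a ring homomorphism $\varphi:MU^*\otimes_{\mathbb{Z}}\mathbb{Q}\to\mathbb{C}$ with $\varphi(1)=1$. Its logarithm is $\log_\varphi(z)=\sum_{n\ge1}\frac{\varphi(\mathbb{C}P^{n-1})}{n}z^n$ (with $\mathbb{C}P^0:=1$), a power series $z+O(z^2)$, and $\log_\varphi^{-1}$ is its compositional inverse; $Q_\varphi\in1+z\mathbb{C}[[z]]$. Let $l,l^*$ be symbols with $l^*l=1$. $\tilde{\mathcal E}_1$ is the unital algebra of formal series $\sum_{m,n\ge0}\alpha_{mn}l^m(l^* )^n$ with $\alpha_{mn}\in\mathbb{C}$ and $\alpha_{mn}=0$ for almost all $m$, multiplied using $l^*l=1$; $\tilde\tau_1$ is the linear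 functional sending such a series to $\alpha_{00}$. For $f=\sum f_nz^n\in\mathbb{C}[[z]]$, $f(l^* )=\sum f_n(l^* )^n$. The $\tilde\tau_1$-distribution of $a\in\tilde{\mathcal E}_1$ is $\mu_a:\mathbb{C}[X]\to\mathbb{C}$, $\mu_a(X^k)=\tilde\tau_1(a^k)$. For a distribution $\mu$ with $\mu(X)\ne0$, with $M_\mu(z)=\sum_{n\ge1}\mu(X^n)z^n$, the $S$-transform is $S_\mu(z)=\frac{1+z}{z}M_\mu^{-1}(z)$ ($M_\mu^{-1}$ the compositional inverse). *)

theory Defs
  imports "HOL-Analysis.Analysis" "HOL-Computational_Algebra.Formal_Power_Series"
begin

text \<open>A complex genus phi on MU^* (x) Q is encoded by its values on the generators
  CP^n:  g n = phi(CP^n), with CP^0 = 1, so g 0 = 1.  Since MU^* (x) Q is the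
  polynomial algebra Q[CP^1, CP^2, ...], genera correspond bijectively to such
  sequences.\<close>

definition is_genus :: "(nat \<Rightarrow> complex) \<Rightarrow> bool" where
  "is_genus g \<longleftrightarrow> g 0 = 1"

definition genus_log :: "(nat \<Rightarrow> complex) \<Rightarrow> complex fps" where
  "genus_log g = Abs_fps (\<lambda>n. if n = 0 then 0 else g (n - 1) / of_nat n)"

definition genus_Q :: "(nat \<Rightarrow> complex) \<Rightarrow> complex fps" where
  "genus_Q g = fps_X / fps_inv (genus_log g)"

text \<open>An element sum alpha_{mn} l^m (l^* )^n is its coefficient function alpha.\<close>
type_synonym elt = "nat \<Rightarrow> nat \<Rightarrow> complex"

definition E1 :: "elt set" where
  "E1 = {a. finite {m. \<exists>n. a m n \<noteq> 0}}"

text \<open>Product of monomials using l^* l = 1: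
  (l^m l^{*n})(l^p l^{*q}) = l^m l^{*(n-p+q)} if p <= n, else l^{m+p-n} l^{*q}.\<close>
definition mono_mult :: "nat \<Rightarrow> nat \<Rightarrow> nat \<Rightarrow> nat \<Rightarrow> nat \<times> nat" where
  "mono_mult m n p q = (if p \<le> n then (m, n - p + q) else (m + p - n, q))"

definition E_mult :: "elt \<Rightarrow> elt \<Rightarrow> elt" where
  "E_mult a b = (\<lambda>i j. \<Sum>\<^sub>\<infinity>(m, n, p, q) \<in> {(m, n, p, q). mono_mult m n p q = (i, j)}.
      a m n * b p q)"

definition E_add :: "elt \<Rightarrow> elt \<Rightarrow> elt" where
  "E_add a b = (\<lambda>i j. a i j + b i j)"

definition E_one :: elt where
  "E_one = (\<lambda>i j. if i = 0 \<and> j = 0 then 1 else 0)"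

definition E_l :: elt where
  "E_l = (\<lambda>i j. if i = 1 \<and> j = 0 then 1 else 0)"

definition E_of_fps_lstar :: "complex fps \<Rightarrow> elt" where
  "E_of_fps_lstar f = (\<lambda>i j. if i = 0 then fps_nth f j else 0)"

primrec E_pow :: "elt \<Rightarrow> nat \<Rightarrow> elt" where
  "E_pow a 0 = E_one"
| "E_pow a (Suc k) = E_mult a (E_pow a k)"

definition E_tau :: "elt \<Rightarrow> complex" where
  "E_tau a = a 0 0"

text \<open>The tau-distribution mu_a : C[X] -> C is a linear functional, hence determined
  by (and here represented by) its moment sequence k |-> mu_a(X^k) = tau(a^k).\<close>
definition tau_distr :: "elt \<Rightarrow> nat \<Rightarrow> complex" where
  "tau_distr a k = E_tau (E_pow a k)"

definition moment_series :: "(nat \<Rightarrow> complex) \<Rightarrow> complex fps" where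
  "moment_series \<mu> = Abs_fps (\<lambda>n. if n = 0 then 0 else \<mu> n)"

definition S_transform :: "(nat \<Rightarrow> complex) \<Rightarrow> complex fps" where
  "S_transform \<mu> = (1 + fps_X) * (fps_inv (moment_series \<mu>) / fps_X)"

definition A_op :: "(nat \<Rightarrow> complex) \<Rightarrow> elt" where
  "A_op g = E_mult (E_add E_one E_l) (E_of_fps_lstar (inverse (genus_Q g)))"

end

theory Submission
  imports Defs
begin

unbundle no vec_syntax
unbundle fps_syntax

text \<open>For a power series v with v(0) = 1, the operator (1 + l) v(l*) has moment
  series M with inverse z / ((1 + z) v(z)), hence S-transform 1/v.  Only the column of
  l^0 matters: with w_k(i) the coefficient of l^i in ((1 + l) v(l*))^k, the series
  F_i = sum_k w_k(i) psi^k along psi = z / ((1 + z) v(z)) obey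
  F_i = [i = 0] + psi * sum_n v_n (F_(n+i) + F_(n+i-1)), which is solved by
  F_i = z^i (1 + z); in particular M(psi) = F_0 - 1 = z.  For A_phi one takes
  v = 1/Q_phi = log_phi^-1(z)/z, and injectivity holds because the S-transform recovers
  Q_phi, hence log_phi, hence every phi(CP^n).\<close>

definition one_plus_l_op :: "complex fps \<Rightarrow> elt" where
  "one_plus_l_op v = (\<lambda>i j. if i \<le> 1 then v $ j else 0)"

lemma E_mult_one_plus_l_E_of_fps_lstar:
  "E_mult (E_add E_one E_l) (E_of_fps_lstar v) = one_plus_l_op v"
proof (intro ext)
  fix i j
  let ?f = "\<lambda>(m, n, p, q). E_add E_one E_l m n * E_of_fps_lstar v p q"
  let ?S = "{(m, n, p, q). mono_mult m n p q = (i, j)}"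
  let ?T = "if i \<le> 1 then {(i, 0::nat, 0::nat, j)} else {}"
  have "infsum ?f ?S = infsum ?f ?T"
  proof (rule infsum_cong_neutral)
    fix x assume "x \<in> ?T - ?S"
    then show "?f x = 0" by (auto split: if_splits simp: mono_mult_def)
  next
    fix x assume "x \<in> ?S - ?T"
    then show "?f x = 0"
      by (cases x) (auto simp: E_add_def E_one_def E_l_def E_of_fps_lstar_def mono_mult_def
          split: if_splits)
  qed simp
  also have "\<dots> = one_plus_l_op v i j"
    by (auto simp: E_add_def E_one_def E_l_def E_of_fps_lstar_def one_plus_l_op_def)
  finally show "E_mult (E_add E_one E_l) (E_of_fps_lstar v) i j = one_plus_l_op v i j"
    unfolding E_mult_def .
qed

lemma one_plus_l_op_in_E1: "one_plus_l_op v \<in> E1"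
proof -
  have "{m. \<exists>n. one_plus_l_op v m n \<noteq> 0} \<subseteq> {0, 1}"
    by (auto simp: one_plus_l_op_def split: if_splits)
  then show ?thesis unfolding E1_def by (auto intro: finite_subset)
qed

lemma E_tau_one_plus_l_op: "E_tau (one_plus_l_op v) = v $ 0"
  by (simp add: E_tau_def one_plus_l_op_def)

lemma mono_mult_eq_column_0_iff:
  "mono_mult m n p q = (i, 0) \<longleftrightarrow> m \<le> i \<and> p = n + i - m \<and> q = 0"
  unfolding mono_mult_def by auto

lemma E_mult_one_plus_l_op_column_0:
  assumes y_vanish: "\<And>p. p > K \<Longrightarrow> y p 0 = 0"
  shows "E_mult (one_plus_l_op v) y i 0 =
     (\<Sum>n\<le>K. v $ n * (y (n + i) 0 + (if 1 \<le> i then y (n + i - 1) 0 else 0)))"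
proof -
  let ?f = "\<lambda>(m, n, p, q). one_plus_l_op v m n * y p q"
  let ?S = "{(m, n, p, q). mono_mult m n p q = (i, 0)}"
  define T0 where "T0 = (\<lambda>n. (0::nat, n, n + i, 0::nat)) ` {..K}"
  define T1 where "T1 = (if 1 \<le> i then (\<lambda>n. (1::nat, n, n + i - 1, 0::nat)) ` {..K} else {})"
  have "infsum ?f ?S = infsum ?f (T0 \<union> T1)"
  proof (rule infsum_cong_neutral)
    fix x assume "x \<in> (T0 \<union> T1) - ?S"
    then show "?f x = 0"
      by (auto simp: T0_def T1_def mono_mult_eq_column_0_iff split: if_splits)
  next
    fix x assume x: "x \<in> ?S - (T0 \<union> T1)"
    obtain m n p q where x_eq: "x = (m, n, p, q)" by (cases x) auto
    show "?f x = 0"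
    proof (rule ccontr)
      assume "?f x \<noteq> 0"
      then have "m \<le> 1" and "y p q \<noteq> 0" by (auto simp: x_eq one_plus_l_op_def split: if_splits)
      moreover from x have "m \<le> i" and "p = n + i - m" and "q = 0"
        by (auto simp: x_eq mono_mult_eq_column_0_iff)
      ultimately have "n \<le> K" and "m = 0 \<or> m = 1"
        using y_vanish[of p] by (fastforce simp: not_less)+
      with \<open>m \<le> i\<close> \<open>p = n + i - m\<close> \<open>q = 0\<close> have "x \<in> T0 \<union> T1"
        by (auto simp: x_eq T0_def T1_def)
      then show False using x by blast
    qed
  qed simp
  also have "\<dots> = sum ?f T0 + sum ?f T1"
    by (subst infsum_finite) (auto simp: T0_def T1_def intro: sum.union_disjoint)
  also have "sum ?f T0 = (\<Sum>n\<le>K. v $ n * y (n + i) 0)"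
    unfolding T0_def by (subst sum.reindex) (auto simp: inj_on_def one_plus_l_op_def)
  also have "sum ?f T1 = (\<Sum>n\<le>K. v $ n * (if 1 \<le> i then y (n + i - 1) 0 else 0))"
    unfolding T1_def by (cases "1 \<le> i") (auto simp: sum.reindex inj_on_def one_plus_l_op_def)
  finally show ?thesis
    unfolding E_mult_def by (simp add: sum.distrib distrib_left)
qed

lemma E_pow_one_plus_l_op_column_0_vanish:
  "k < i \<Longrightarrow> E_pow (one_plus_l_op v) k i 0 = 0"
proof (induction k arbitrary: i)
  case 0
  then show ?case by (simp add: E_one_def)
next
  case (Suc k)
  have "E_pow (one_plus_l_op v) (Suc k) i 0 = (\<Sum>n\<le>k. v $ n *
      (E_pow (one_plus_l_op v) k (n + i) 0 +
       (if 1 \<le> i then E_pow (one_plus_l_op v) k (n + i - 1) 0 else 0)))"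
    unfolding E_pow.simps by (rule E_mult_one_plus_l_op_column_0) (use Suc.IH in auto)
  also have "\<dots> = 0" using Suc.prems by (intro sum.neutral) (auto simp: Suc.IH)
  finally show ?case .
qed

lemma E_pow_one_plus_l_op_column_0_Suc:
  "k \<le> K \<Longrightarrow> E_pow (one_plus_l_op v) (Suc k) i 0 = (\<Sum>n\<le>K. v $ n *
      (E_pow (one_plus_l_op v) k (n + i) 0 +
       (if 1 \<le> i then E_pow (one_plus_l_op v) k (n + i - 1) 0 else 0)))"
  unfolding E_pow.simps
  by (rule E_mult_one_plus_l_op_column_0) (auto intro: E_pow_one_plus_l_op_column_0_vanish)

lemma fps_mult_nth_as_sum_fps_X_power:
  fixes f v :: "'a::comm_semiring_1 fps"
  assumes "c \<le> N"
  shows "(f * v) $ c = (\<Sum>n\<le>N. v $ n * (fps_X ^ n * f) $ c)"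
proof -
  have "(\<Sum>n\<le>N. v $ n * (fps_X ^ n * f) $ c) = (\<Sum>n\<le>c. v $ n * f $ (c - n))"
    using assms by (intro sum.mono_neutral_cong_right) (auto simp: fps_X_power_mult_nth)
  also have "\<dots> = (v * f) $ c" by (simp add: fps_mult_nth atLeast0AtMost)
  finally show ?thesis by (simp add: mult.commute)
qed

lemma fps_mult_nth_cong_lower:
  fixes p f g :: "'a::comm_semiring_1 fps"
  assumes "p $ 0 = 0" and "\<And>c. c < b \<Longrightarrow> f $ c = g $ c"
  shows "(p * f) $ b = (p * g) $ b"
  unfolding fps_mult_nth
proof (rule sum.cong)
  fix a assume "a \<in> {0..b}"
  then show "p $ a * f $ (b - a) = p $ a * g $ (b - a)"
    using assms by (cases "a = 0") auto
qed simp

lemma column_series_nth: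
  fixes w :: "nat \<Rightarrow> nat \<Rightarrow> complex" and p v :: "complex fps"
  assumes p0: "p $ 0 = 0" and p_inverse: "p * ((1 + fps_X) * v) = fps_X"
    and w0: "\<And>i. w 0 i = (if i = 0 then 1 else 0)"
    and w_Suc: "\<And>k i K. k \<le> K \<Longrightarrow> w (Suc k) i =
        (\<Sum>n\<le>K. v $ n * (w k (n + i) + (if 1 \<le> i then w k (n + i - 1) else 0)))"
  shows "b \<le> N \<Longrightarrow>
    (\<Sum>k\<le>N. fps_const (w k i) * p ^ k) $ b = (fps_X ^ i * (1 + fps_X)) $ b"
proof (induction N arbitrary: i b)
  case 0
  then show ?case by (simp add: w0)
next
  case (Suc N)
  let ?F = "\<lambda>j. fps_X ^ j * (1 + fps_X) :: complex fps"
  define D where "D = (\<Sum>k\<le>N. fps_const (w (Suc k) i) * p ^ k)"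
  define E where "E = (fps_X ^ i + (if 1 \<le> i then fps_X ^ (i - 1) else 0)) * ((1 + fps_X) * v)"
  have D_eq_E: "D $ c = E $ c" if "c \<le> N" for c
  proof -
    have F_shift: "fps_X ^ n * ?F j = ?F (n + j)" for n j
      by (simp add: power_add mult.assoc)
    have F_mult_nth: "(?F j * v) $ c = (\<Sum>n\<le>N. v $ n * ?F (n + j) $ c)" for j
      using fps_mult_nth_as_sum_fps_X_power[OF that, of "?F j" v] by (simp only: F_shift)
    have "D $ c = (\<Sum>k\<le>N. \<Sum>n\<le>N.
        v $ n * ((w k (n + i) + (if 1 \<le> i then w k (n + i - 1) else 0)) * (p ^ k) $ c))"
      by (simp add: D_def fps_sum_nth w_Suc sum_distrib_right mult.assoc)
    also have "\<dots> = (\<Sum>n\<le>N. v $ n * ((\<Sum>k\<le>N. fps_const (w k (n + i)) * p ^ k) $ c +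
        (if 1 \<le> i then (\<Sum>k\<le>N. fps_const (w k (n + i - 1)) * p ^ k) $ c else 0)))"
      by (subst sum.swap, intro sum.cong refl, cases "1 \<le> i")
        (simp_all add: fps_sum_nth sum_distrib_left algebra_simps sum.distrib)
    also have "\<dots> =
        (\<Sum>n\<le>N. v $ n * (?F (n + i) $ c + (if 1 \<le> i then ?F (n + i - 1) $ c else 0)))"
      by (intro sum.cong refl) (simp add: Suc.IH[OF that] cong: if_cong)
    also have "\<dots> = (?F i * v) $ c + (if 1 \<le> i then (?F (i - 1) * v) $ c else 0)"
      using F_mult_nth[of i] F_mult_nth[of "i - 1"]
      by (cases "1 \<le> i") (simp_all add: distrib_left sum.distrib)
    also have "\<dots> = E $ c"
      by (cases "1 \<le> i") (simp_all add: E_def algebra_simps)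
    finally show ?thesis .
  qed
  have "(\<Sum>k\<le>Suc N. fps_const (w k i) * p ^ k) = fps_const (w 0 i) + p * D"
    unfolding D_def sum.atMost_Suc_shift by (simp add: sum_distrib_left mult_ac)
  moreover have "(p * D) $ b = (p * E) $ b"
    using Suc.prems D_eq_E by (intro fps_mult_nth_cong_lower[OF p0]) simp
  moreover have "p * E = (fps_X ^ i + (if 1 \<le> i then fps_X ^ (i - 1) else 0)) * fps_X"
    unfolding E_def using p_inverse by (metis mult.left_commute)
  ultimately show ?case
    by (cases i) (auto simp: w0 algebra_simps)
qed

lemma fps_inv_moment_series_one_plus_l_op:
  assumes v0: "v $ 0 = 1"
  shows "fps_inv (moment_series (tau_distr (one_plus_l_op v))) = fps_X * inverse ((1 + fps_X) * v)"
proof -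
  define p where "p = fps_X * inverse ((1 + fps_X) * v)"
  define w where "w = (\<lambda>k i. E_pow (one_plus_l_op v) k i 0)"
  define M where "M = moment_series (tau_distr (one_plus_l_op v))"
  have p0: "p $ 0 = 0" by (simp add: p_def)
  have "inverse ((1 + fps_X) * v) * ((1 + fps_X) * v) = 1"
    using v0 by (intro inverse_mult_eq_1) simp
  then have p_inverse: "p * ((1 + fps_X) * v) = fps_X" by (simp add: p_def mult.assoc)
  have w0: "w 0 i = (if i = 0 then 1 else 0)" for i by (simp add: w_def E_one_def)
  have w_Suc: "w (Suc k) i =
      (\<Sum>n\<le>K. v $ n * (w k (n + i) + (if 1 \<le> i then w k (n + i - 1) else 0)))"
    if "k \<le> K" for k i K
    unfolding w_def using that by (rule E_pow_one_plus_l_op_column_0_Suc)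
  have w_series: "(\<Sum>k\<le>N. fps_const (w k 0) * p ^ k) $ N = (1 + fps_X) $ N" for N
    using column_series_nth[OF p0 p_inverse w0 w_Suc, of N N 0] by simp
  have M_nth: "M $ n = w n 0 - (if n = 0 then 1 else 0)" for n
    by (simp add: M_def moment_series_def tau_distr_def E_tau_def w_def E_one_def)
  have M0: "M $ 0 = 0" by (simp add: M_nth w0)
  have "w 1 0 = v $ 0" using w_Suc[of 0 0 0] by (simp add: w0)
  then have M1: "M $ 1 \<noteq> 0" using v0 by (simp add: M_nth)
  have "M oo p = fps_X"
  proof (rule fps_ext)
    fix n
    have "(M oo p) $ n = (\<Sum>k\<le>n. fps_const (w k 0) * p ^ k) $ n -
        (\<Sum>k\<le>n. (if k = 0 then 1 else 0) * (p ^ k) $ n)"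
      by (simp add: fps_compose_nth M_nth fps_sum_nth atLeast0AtMost algebra_simps sum_subtractf)
    then show "(M oo p) $ n = fps_X $ n"
      by (simp add: w_series if_distrib[of "\<lambda>x. x * _"] cong: if_cong)
  qed
  then have "fps_inv M = fps_inv M oo (M oo p)" by simp
  also have "\<dots> = (fps_inv M oo M) oo p" by (rule fps_compose_assoc[OF p0 M0])
  also have "\<dots> = p" by (simp add: fps_inv[OF M0 M1] p0)
  finally show ?thesis by (simp add: M_def p_def)
qed

lemma S_transform_one_plus_l_op:
  assumes "v $ 0 = 1"
  shows "S_transform (tau_distr (one_plus_l_op v)) = inverse v"
proof -
  have "S_transform (tau_distr (one_plus_l_op v)) =
      (1 + fps_X) * (fps_X * inverse ((1 + fps_X) * v) / fps_X)"
    by (simp only: S_transform_def fps_inv_moment_series_one_plus_l_op[OF assms])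
  also have "\<dots> = ((1 + fps_X) * inverse (1 + fps_X)) * inverse v"
    by (simp only: nonzero_mult_div_cancel_left[OF fps_X_neq_zero] fps_inverse_mult mult.assoc)
  also have "(1 + fps_X) * inverse (1 + fps_X :: complex fps) = 1"
    by (rule inverse_mult_eq_1') simp
  finally show ?thesis by simp
qed

lemma A_op_eq_one_plus_l_op: "A_op g = one_plus_l_op (inverse (genus_Q g))"
  by (simp add: A_op_def E_mult_one_plus_l_E_of_fps_lstar)

lemma genus_log_nth_0_1:
  assumes "is_genus g"
  shows "genus_log g $ 0 = 0" and "genus_log g $ 1 = 1"
  using assms by (auto simp: genus_log_def is_genus_def)

lemma fps_X_mult_shift_fps_inv_genus_log:
  assumes "is_genus g"
  shows "fps_X * fps_shift 1 (fps_inv (genus_log g)) = fps_inv (genus_log g)"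
    and "fps_shift 1 (fps_inv (genus_log g)) $ 0 = 1"
proof -
  have "fps_inv (genus_log g) $ 0 = 0" and "fps_inv (genus_log g) $ 1 = 1"
    using genus_log_nth_0_1[OF assms] by (auto simp: fps_inv_def)
  then show "fps_X * fps_shift 1 (fps_inv (genus_log g)) = fps_inv (genus_log g)"
    and "fps_shift 1 (fps_inv (genus_log g)) $ 0 = 1"
    by (auto intro!: fps_ext)
qed

lemma inverse_genus_Q:
  assumes "is_genus g"
  shows "inverse (genus_Q g) = fps_shift 1 (fps_inv (genus_log g))"
proof -
  define V where "V = fps_shift 1 (fps_inv (genus_log g))"
  have V0: "V $ 0 = 1" using fps_X_mult_shift_fps_inv_genus_log(2)[OF assms] by (simp add: V_def)
  have "genus_Q g = (fps_X * 1) / (fps_X * V)"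
    unfolding genus_Q_def V_def fps_X_mult_shift_fps_inv_genus_log(1)[OF assms] by simp
  also have "\<dots> = inverse V"
    using V0 by (simp only: div_mult_mult1[OF fps_X_neq_zero]) (simp add: fps_divide_unit)
  finally show ?thesis using V0 by (simp add: V_def)
qed

lemma inj_on_genus_Q: "inj_on genus_Q (Collect is_genus)"
proof (rule inj_onI, clarsimp)
  fix g h assume g: "is_genus g" and h: "is_genus h" and Q_eq: "genus_Q g = genus_Q h"
  have shift_eq: "fps_shift 1 (fps_inv (genus_log g)) = fps_shift 1 (fps_inv (genus_log h))"
    using inverse_genus_Q[OF g] inverse_genus_Q[OF h] Q_eq by simp
  have "fps_inv (genus_log g) = fps_X * fps_shift 1 (fps_inv (genus_log g))"
    by (rule fps_X_mult_shift_fps_inv_genus_log(1)[OF g, symmetric])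
  also have "\<dots> = fps_X * fps_shift 1 (fps_inv (genus_log h))" by (simp only: shift_eq)
  also have "\<dots> = fps_inv (genus_log h)" by (rule fps_X_mult_shift_fps_inv_genus_log(1)[OF h])
  finally have "fps_inv (fps_inv (genus_log g)) = fps_inv (fps_inv (genus_log h))" by simp
  then have "genus_log g = genus_log h"
    using genus_log_nth_0_1[OF g] genus_log_nth_0_1[OF h] by (simp add: fps_inv_idempotent)
  then have "genus_log g $ Suc n = genus_log h $ Suc n" for n by simp
  then have "g n / of_nat (Suc n) = h n / of_nat (Suc n)" for n
    by (simp add: genus_log_def del: of_nat_Suc)
  then show "g = h" by (intro ext) (simp del: of_nat_Suc)
qed

lemma inverse_genus_Q_nth_0: "is_genus g \<Longrightarrow> inverse (genus_Q g) $ 0 = 1"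
  using inverse_genus_Q fps_X_mult_shift_fps_inv_genus_log(2) by simp

lemma S_transform_A_op:
  assumes "is_genus g"
  shows "S_transform (tau_distr (A_op g)) = genus_Q g"
proof -
  have "genus_Q g $ 0 \<noteq> 0" using inverse_genus_Q_nth_0[OF assms] by auto
  then show ?thesis
    using inverse_genus_Q_nth_0[OF assms]
    by (simp add: A_op_eq_one_plus_l_op S_transform_one_plus_l_op del: fps_inverse_nth_0)
qed

theorem mainTheorem5:
  shows "(\<forall>g. is_genus g \<longrightarrow>
            A_op g \<in> E1 \<and> E_tau (A_op g) \<noteq> 0 \<and>
            S_transform (tau_distr (A_op g)) = genus_Q g)
       \<and> (\<forall>g h. is_genus g \<longrightarrow> is_genus h \<longrightarrow> g \<noteq> h \<longrightarrow>
            A_op g \<noteq> A_op h \<and> tau_distr (A_op g) \<noteq> tau_distr (A_op h))"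
proof (intro conjI allI impI)
  fix g assume g: "is_genus g"
  show "A_op g \<in> E1" by (simp add: A_op_eq_one_plus_l_op one_plus_l_op_in_E1)
  show "E_tau (A_op g) \<noteq> 0"
    using inverse_genus_Q_nth_0[OF g] by (simp add: A_op_eq_one_plus_l_op E_tau_one_plus_l_op)
  show "S_transform (tau_distr (A_op g)) = genus_Q g" using g by (rule S_transform_A_op)
next
  fix g h assume g: "is_genus g" and h: "is_genus h" and "g \<noteq> h"
  then have "genus_Q g \<noteq> genus_Q h" using inj_on_genus_Q by (auto dest: inj_onD)
  then show "tau_distr (A_op g) \<noteq> tau_distr (A_op h)"
    by (metis S_transform_A_op[OF g] S_transform_A_op[OF h])
  then show "A_op g \<noteq> A_op h" by auto
qed

end
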